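(* Let $0<\alpha\le1$, $\delta>0$ and $\bar u\in L^2(\Omega)^d$. For every integer $j\ge0$, the $j$-th Mitlar iterate $u_j$ computed from the data $\bar u$ satisfies $$u_j=D_\alpha\sum_{i=0}^{j}\big(\alpha D_\alpha(I-G)\big)^i\,\bar u .$$
   Context: Let $\Omega\subset\mathbb{R}^n$ be a regular, bounded, polyhedral domain, $d\ge1$, $X=H^1_0(\Omega)^d$, and $(\cdot,\cdot)$ the $L^2(\Omega)^d$ inner product. The differential filter $G:L^2(\Omega)^d\to X$ with filter radius $\delta>0$ is defined by $Gu=\bar u$, where $\bar u\in X$ is the unique solution of $\delta^2(\nabla\bar u,\nabla v)+(\bar u,v)=(u,v)$ for all $v\in X$; it is regarded as a bounded self-adjoint operator on $L^2(\Omega)^d$. For $\alpha\in(0,1]$ let $D_\alpha=[(1-\alpha)G+\alpha I]^{-1}$. Mitlar with data $\bar u$: $u_0$ solves $[(1-\alpha)G+\alpha I]u_0=\bar u$, and for $j\ge1$, $u_j$ solves $[(1-\alpha)G+\alpha I](u_j-u_{j-1})=\bar u-Gu_{j-1}$. *)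

theory Defs
  imports "HOL-Analysis.Analysis"
begin

text \<open>Abstract setting: H is a real Hilbert space (playing the role of L^2(Omega)^d),
and G is the differential filter, recorded through its operator properties:
bounded linear, self-adjoint, and 0 <= (G u, u) <= (u, u).\<close>

definition differential_filter_like :: "('a::{real_inner,complete_space} \<Rightarrow> 'a) \<Rightarrow> bool" where
  "differential_filter_like G \<longleftrightarrow> bounded_linear G
     \<and> (\<forall>u v. inner (G u) v = inner u (G v))
     \<and> (\<forall>u. 0 \<le> inner (G u) u \<and> inner (G u) u \<le> inner u u)"

definition filt_comb :: "real \<Rightarrow> ('a::real_vector \<Rightarrow> 'a) \<Rightarrow> 'a \<Rightarrow> 'a" where
  "filt_comb \<alpha> G = (\<lambda>u. (1 - \<alpha>) *\<^sub>R G u + \<alpha> *\<^sub>R u)"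

definition D_alpha :: "real \<Rightarrow> ('a::real_vector \<Rightarrow> 'a) \<Rightarrow> 'a \<Rightarrow> 'a" where
  "D_alpha \<alpha> G = inv (filt_comb \<alpha> G)"

definition mitlar_iterates :: "real \<Rightarrow> ('a::real_vector \<Rightarrow> 'a) \<Rightarrow> 'a \<Rightarrow> (nat \<Rightarrow> 'a) \<Rightarrow> bool" where
  "mitlar_iterates \<alpha> G ubar u \<longleftrightarrow>
     filt_comb \<alpha> G (u 0) = ubar \<and>
     (\<forall>j\<ge>1. filt_comb \<alpha> G (u j - u (j - 1)) = ubar - G (u (j - 1)))"

end

theory Submission imports Defs begin

text \<open>Because \<open>G\<close> is bounded with \<open>0 \<le> (G x, x)\<close>, the operator \<open>F = (1 - \<alpha>) G + \<alpha> I\<close> is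
bounded and coercive, \<open>\<alpha> (x, x) \<le> (F x, x)\<close>; for small \<open>t > 0\<close> the map \<open>I - t F\<close> is then a
contraction, and Banach's fixed point theorem makes \<open>F\<close> bijective.  So \<open>D\<^sub>\<alpha> = F\<^sup>-\<^sup>1\<close> is
linear and commutes with \<open>G\<close>, and \<open>\<alpha> I = F - (1 - \<alpha>) G\<close> turns the Mitlar operator
\<open>T v = \<alpha> D\<^sub>\<alpha> (v - G v)\<close> into \<open>T v = v - G (D\<^sub>\<alpha> v)\<close>.  Consequently the residuals
\<open>r\<^sub>k = ubar - G u\<^sub>k\<close> satisfy \<open>r\<^sub>0 = T ubar\<close> and \<open>r\<^sub>k\<^sub>+\<^sub>1 = T r\<^sub>k\<close>, while
\<open>F u\<^sub>k\<^sub>+\<^sub>1 = F u\<^sub>k + r\<^sub>k\<close>, so \<open>F u\<^sub>j\<close> is the partial sum of \<open>T\<^sup>i ubar\<close>.\<close>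

lemma contraction_of_coercive:
  fixes F :: "'a::real_inner \<Rightarrow> 'a"
  assumes "bounded_linear F" "0 < a" and coercive: "\<And>x. a * inner x x \<le> inner (F x) x"
  obtains t c where "0 < t" "0 \<le> c" "c < 1" "\<And>z. norm (z - t *\<^sub>R F z) \<le> c * norm z"
proof -
  interpret F: bounded_linear F by fact
  obtain K where "\<And>x. norm (F x) \<le> norm x * K" using F.bounded by blast
  define B where "B = max K (max 1 a)"
  have B: "B \<ge> 1" "a \<le> B" "\<And>x. norm (F x) \<le> norm x * B"
    unfolding B_def by (auto intro: order_trans[OF \<open>norm (F _) \<le> _\<close> mult_left_mono])
  define t where "t = a / B\<^sup>2"
  define c where "c = sqrt (1 - a\<^sup>2 / B\<^sup>2)"
  have "0 < t" using B assms(2) unfolding t_def by simp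
  have aB: "a\<^sup>2 / B\<^sup>2 \<le> 1" using B(2) assms(2) by (simp add: power_mono)
  have "0 \<le> c" "c < 1" unfolding c_def using aB assms(2) B by auto
  moreover have "norm (z - t *\<^sub>R F z) \<le> c * norm z" for z
  proof -
    have "(norm (z - t *\<^sub>R F z))\<^sup>2 = inner z z - 2 * t * inner (F z) z + t\<^sup>2 * (norm (F z))\<^sup>2"
      unfolding power2_norm_eq_inner
      by (simp add: inner_diff_left inner_diff_right inner_commute algebra_simps power2_eq_square)
    also have "\<dots> \<le> inner z z - 2 * t * (a * inner z z) + t\<^sup>2 * (norm z * B)\<^sup>2"
      using coercive[of z] B(3)[of z] \<open>0 < t\<close>
      by (intro add_mono diff_mono mult_left_mono power_mono) auto
    also have "\<dots> = (c * norm z)\<^sup>2"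
      using B aB unfolding t_def c_def by (simp add: dot_square_norm field_simps power2_eq_square)
    finally show ?thesis using \<open>0 \<le> c\<close> by (simp add: power2_le_iff_abs_le)
  qed
  ultimately show ?thesis using \<open>0 < t\<close> that by blast
qed

lemma bij_if_coercive:
  fixes F :: "'a::{real_inner,complete_space} \<Rightarrow> 'a"
  assumes "bounded_linear F" "0 < a" "\<And>x. a * inner x x \<le> inner (F x) x"
  shows "bij F"
proof -
  interpret F: bounded_linear F by fact
  obtain t c where "0 < t" "0 \<le> c" "c < 1" and contr: "\<And>z. norm (z - t *\<^sub>R F z) \<le> c * norm z"
    using contraction_of_coercive[OF assms] by blast
  have "inj F"
  proof (rule injI)
    fix x y assume "F x = F y"
    then have "F (x - y) = 0" by (simp add: F.diff)
    then have "norm (x - y) \<le> c * norm (x - y)" using contr[of "x - y"] by simp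
    then have "(1 - c) * norm (x - y) \<le> 0" by (simp add: algebra_simps)
    then show "x = y" using \<open>c < 1\<close> by (simp add: mult_le_0_iff)
  qed
  moreover have "surj F"
  proof -
    have "\<exists>x. F x = y" for y
    proof -
      have "dist (x - t *\<^sub>R (F x - y)) (z - t *\<^sub>R (F z - y)) \<le> c * dist x z" for x z
      proof -
        have shift: "(x - t *\<^sub>R (F x - y)) - (z - t *\<^sub>R (F z - y)) = (x - z) - t *\<^sub>R F (x - z)"
          by (simp add: F.diff algebra_simps)
        show ?thesis unfolding dist_norm shift by (rule contr)
      qed
      then obtain x where "x - t *\<^sub>R (F x - y) = x"
        using banach_fix_type[OF \<open>0 \<le> c\<close> \<open>c < 1\<close>, of "\<lambda>x. x - t *\<^sub>R (F x - y)"] by blast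
      then show ?thesis using \<open>0 < t\<close> by auto
    qed
    then show ?thesis unfolding surj_def by metis
  qed
  ultimately show ?thesis by (simp add: bij_def)
qed

lemma linear_inv_of_bij:
  assumes "linear f" "bij f"
  shows "linear (inv f)"
proof -
  interpret linear f by fact
  have inv_f: "inv f (f x) = x" and f_inv: "f (inv f y) = y" for x y
    using \<open>bij f\<close> by (simp_all add: bij_is_inj bij_is_surj surj_f_inv_f)
  show ?thesis
  proof (rule linearI)
    show "inv f (x + y) = inv f x + inv f y" for x y
      using inv_f[of "inv f x + inv f y"] by (simp add: add f_inv)
    show "inv f (r *\<^sub>R x) = r *\<^sub>R inv f x" for r x
      using inv_f[of "r *\<^sub>R inv f x"] by (simp add: scale f_inv)
  qed
qed

context
  fixes G :: "'a::{real_inner,complete_space} \<Rightarrow> 'a" and \<alpha> :: real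
  assumes G: "differential_filter_like G" and \<alpha>: "0 < \<alpha>" "\<alpha> \<le> 1"
begin

interpretation G: bounded_linear G
  using G unfolding differential_filter_like_def by blast

lemma bounded_linear_filt_comb: "bounded_linear (filt_comb \<alpha> G)"
  unfolding filt_comb_def
  by (intro bounded_linear_add bounded_linear_ident bounded_linear_scaleR_right
      bounded_linear_compose[OF bounded_linear_scaleR_right G.bounded_linear])

lemma filt_comb_coercive: "\<alpha> * inner x x \<le> inner (filt_comb \<alpha> G x) x"
proof -
  have "0 \<le> inner (G x) x" using G unfolding differential_filter_like_def by blast
  then have "0 \<le> (1 - \<alpha>) * inner (G x) x" using \<alpha> by simp
  then show ?thesis unfolding filt_comb_def by (simp add: inner_add_left)
qed

lemma bij_filt_comb: "bij (filt_comb \<alpha> G)"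
  using bij_if_coercive bounded_linear_filt_comb filt_comb_coercive \<alpha>(1) by blast

lemma filt_comb_D_alpha [simp]: "filt_comb \<alpha> G (D_alpha \<alpha> G y) = y"
  unfolding D_alpha_def using bij_filt_comb by (simp add: bij_is_surj surj_f_inv_f)

lemma D_alpha_filt_comb [simp]: "D_alpha \<alpha> G (filt_comb \<alpha> G y) = y"
  unfolding D_alpha_def using bij_filt_comb by (simp add: bij_is_inj)

lemma linear_D_alpha: "linear (D_alpha \<alpha> G)"
  unfolding D_alpha_def
  by (rule linear_inv_of_bij[OF bounded_linear.linear[OF bounded_linear_filt_comb] bij_filt_comb])

lemma D_alpha_commute: "D_alpha \<alpha> G (G v) = G (D_alpha \<alpha> G v)"
proof -
  have "filt_comb \<alpha> G (G w) = G (filt_comb \<alpha> G w)" for w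
    unfolding filt_comb_def by (simp add: G.add G.scale)
  then show ?thesis by (metis D_alpha_filt_comb filt_comb_D_alpha)
qed

lemma mitlar_operator_eq_residual: "\<alpha> *\<^sub>R D_alpha \<alpha> G (v - G v) = v - G (D_alpha \<alpha> G v)"
proof -
  interpret D: linear "D_alpha \<alpha> G" by (rule linear_D_alpha)
  have "\<alpha> *\<^sub>R (v - G v) = filt_comb \<alpha> G v - G v"
    unfolding filt_comb_def by (simp add: algebra_simps)
  then have "\<alpha> *\<^sub>R D_alpha \<alpha> G (v - G v) = D_alpha \<alpha> G (filt_comb \<alpha> G v - G v)"
    by (metis D.scale)
  then show ?thesis by (simp add: D.diff D_alpha_commute)
qed

lemma mitlar_iterates_partial_sum:
  assumes "mitlar_iterates \<alpha> G ubar u"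
  defines "T \<equiv> \<lambda>v. \<alpha> *\<^sub>R D_alpha \<alpha> G (v - G v)"
  shows "filt_comb \<alpha> G (u k) = (\<Sum>i\<le>k. (T ^^ i) ubar) \<and> ubar - G (u k) = (T ^^ Suc k) ubar"
proof (induction k)
  case 0
  have "filt_comb \<alpha> G (u 0) = ubar" using assms(1) unfolding mitlar_iterates_def by blast
  then have "u 0 = D_alpha \<alpha> G ubar" by (metis D_alpha_filt_comb)
  then show ?case
    using \<open>filt_comb \<alpha> G (u 0) = ubar\<close> by (simp add: T_def mitlar_operator_eq_residual)
next
  case (Suc k)
  interpret F: bounded_linear "filt_comb \<alpha> G" by (rule bounded_linear_filt_comb)
  have step: "filt_comb \<alpha> G (u (Suc k) - u k) = ubar - G (u k)"
    using assms(1) unfolding mitlar_iterates_def by (metis diff_Suc_1 le_add1 plus_1_eq_Suc)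
  then have "u (Suc k) - u k = D_alpha \<alpha> G (ubar - G (u k))" by (metis D_alpha_filt_comb)
  then have "u (Suc k) = u k + D_alpha \<alpha> G (ubar - G (u k))" by (simp add: diff_eq_eq add.commute)
  then have "ubar - G (u (Suc k)) = (ubar - G (u k)) - G (D_alpha \<alpha> G (ubar - G (u k)))"
    by (simp add: G.add diff_diff_eq)
  also have "\<dots> = T (ubar - G (u k))" by (simp add: T_def mitlar_operator_eq_residual)
  finally have "ubar - G (u (Suc k)) = T (ubar - G (u k))" .
  moreover have "filt_comb \<alpha> G (u (Suc k)) = filt_comb \<alpha> G (u k) + (ubar - G (u k))"
    using step by (simp add: F.diff diff_eq_eq add.commute)
  ultimately show ?case using Suc by (simp only: sum.atMost_Suc funpow.simps(2) o_apply)
qed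

end

theorem mainTheorem4:
  fixes G :: "'a::{real_inner,complete_space} \<Rightarrow> 'a" and \<alpha> \<delta> :: real
    and ubar :: 'a and u :: "nat \<Rightarrow> 'a" and j :: nat
  assumes "0 < \<alpha>" "\<alpha> \<le> 1" "\<delta> > 0"
    and "differential_filter_like G"
    and "mitlar_iterates \<alpha> G ubar u"
  shows "u j = D_alpha \<alpha> G
           (\<Sum>i\<le>j. ((\<lambda>v. \<alpha> *\<^sub>R D_alpha \<alpha> G (v - G v)) ^^ i) ubar)"
proof -
  have "filt_comb \<alpha> G (u j) = (\<Sum>i\<le>j. ((\<lambda>v. \<alpha> *\<^sub>R D_alpha \<alpha> G (v - G v)) ^^ i) ubar)"
    using mitlar_iterates_partial_sum assms by blast
  then show ?thesis using D_alpha_filt_comb assms by metis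
qed

end
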